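(* Let $C$ be an ensemble choice aggregator that respects model choice reversal. Let $y,y'\in Y$ and $z,z'\in S(Y)$ be such that for every $j\in\{1,\dots,m\}$ we have $z_{j,d(y)}>z_{j,d(y')}$ if and only if $z'_{j,d(y)}>z'_{j,d(y')}$. Then $C(\{y,y'\},z)=C(\{y,y'\},z')$.
   Context: Let $Y$ be a nonempty set of labels and $m\ge 2$ an integer (the number of models). For each $j\in\{1,\dots,m\}$ let $S_j(Y)\subseteq\mathbb{R}^{|Y|}$ be a set of score vectors whose coordinates are indexed by labels, and let $S(Y)=\prod_{j=1}^m S_j(Y)$. An element $z\in S(Y)$ is written $z=(z_{j,d(y)})_{j,y}$, where $z_{j,d(y)}$ denotes model $j$'s score for label $y$. An ensemble choice aggregator is a set-valued function $C:(2^Y\setminus\{\emptyset\})\times S(Y)\to 2^Y\setminus\{\emptyset\}$ such that for every nonempty $Y^*\subseteq Y$ and every $z\in S(Y)$: (i) $C(Y^*,z)\subseteq Y^*$; and (ii) for every $y\in Y^*$, if there does not exist $y'\in Y^*$ with $\{y'\}=C(\{y,y'\},z)$, then $y\in C(Y^*,z)$. $C$ respects model choice reversal if for all $y,y'\in Y$ and all $z,z'\in S(Y)$: whenever $y\in C(\{y,y'\},z)$, $y'\notin C(\{y,y'\},z)$, and $y'\in C(\{y,y'\},z')$, there exists $j$ such that $z_{j,d(y)}>z_{j,d(y')}$ and $z'_{j,d(y)}<z'_{j,d(y')}$. *)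

theory Defs
  imports Complex_Main "HOL-Library.FuncSet"
begin

type_synonym 'y profile = "nat \<Rightarrow> 'y \<Rightarrow> real"

definition profiles :: "nat \<Rightarrow> (nat \<Rightarrow> ('y \<Rightarrow> real) set) \<Rightarrow> 'y profile set" where
  "profiles m S = PiE {1..m} S"

definition ensemble_choice_aggregator ::
  "'y set \<Rightarrow> 'y profile set \<Rightarrow> ('y set \<Rightarrow> 'y profile \<Rightarrow> 'y set) \<Rightarrow> bool" where
  "ensemble_choice_aggregator Y SY C \<longleftrightarrow>
     (\<forall>Ys z. Ys \<subseteq> Y \<and> Ys \<noteq> {} \<and> z \<in> SY \<longrightarrow>
        C Ys z \<noteq> {} \<and> C Ys z \<subseteq> Ys \<and>
        (\<forall>y\<in>Ys. \<not> (\<exists>y'\<in>Ys. {y'} = C {y, y'} z) \<longrightarrow> y \<in> C Ys z))"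

definition respects_model_choice_reversal ::
  "nat \<Rightarrow> 'y set \<Rightarrow> 'y profile set \<Rightarrow> ('y set \<Rightarrow> 'y profile \<Rightarrow> 'y set) \<Rightarrow> bool" where
  "respects_model_choice_reversal m Y SY C \<longleftrightarrow>
     (\<forall>y\<in>Y. \<forall>y'\<in>Y. \<forall>z\<in>SY. \<forall>z'\<in>SY.
        y \<in> C {y, y'} z \<and> y' \<notin> C {y, y'} z \<and> y' \<in> C {y, y'} z' \<longrightarrow>
        (\<exists>j\<in>{1..m}. z j y > z j y' \<and> z' j y < z' j y'))"

end

theory Submission
  imports Defs
begin

text \<open>If the two profiles give different choices on the pair, some label x is chosen under
  one profile w but not under the other w', and then the remaining label u is chosen under w'
  (choices are nonempty). If u is not chosen under w, then x is the strict choice under w and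
  u is chosen under w'; otherwise u is the strict choice under w' and x is chosen under w.
  Either way model choice reversal yields a model ranking the pair strictly in opposite
  directions in the two profiles, which the sign agreement forbids.\<close>

lemma strict_reversal_contradicts_same_ranking:
  fixes p q :: "'a \<Rightarrow> 'b::linorder"
  assumes "p y > p y' \<longleftrightarrow> q y > q y'" and "{a, b} = {y, y'}"
    and "p a > p b" and "q a < q b"
  shows False
  using assms by (auto simp: doubleton_eq_iff)

lemma ensemble_choice_aggregator_pair:
  assumes "ensemble_choice_aggregator Y SY C" and "y \<in> Y" and "y' \<in> Y" and "z \<in> SY"
  shows "C {y, y'} z \<noteq> {}" and "C {y, y'} z \<subseteq> {y, y'}"
  using assms unfolding ensemble_choice_aggregator_def by auto

lemma strict_choice_kept_if_same_ranking:
  assumes "respects_model_choice_reversal m Y SY C"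
    and "{a, b} = {y, y'}" and "a \<in> Y" and "b \<in> Y" and "w \<in> SY" and "w' \<in> SY"
    and same: "\<forall>j\<in>{1..m}. w j y > w j y' \<longleftrightarrow> w' j y > w' j y'"
    and "a \<in> C {y, y'} w" and "b \<notin> C {y, y'} w"
  shows "b \<notin> C {y, y'} w'"
proof
  assume "b \<in> C {y, y'} w'"
  with assms(2,8,9) have "a \<in> C {a, b} w \<and> b \<notin> C {a, b} w \<and> b \<in> C {a, b} w'"
    by simp
  with assms(1)[unfolded respects_model_choice_reversal_def, rule_format, OF assms(3-6)]
  obtain j where j: "j \<in> {1..m}" "w j a > w j b" "w' j a < w' j b" by blast
  from same j(1) have "w j y > w j y' \<longleftrightarrow> w' j y > w' j y'" ..
  from strict_reversal_contradicts_same_ranking[OF this \<open>{a, b} = {y, y'}\<close> j(2,3)]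
  show False .
qed

lemma pair_choice_subset_if_same_ranking:
  assumes E: "ensemble_choice_aggregator Y SY C"
    and R: "respects_model_choice_reversal m Y SY C"
    and Y: "y \<in> Y" "y' \<in> Y" and w: "w \<in> SY" "w' \<in> SY"
    and same: "\<forall>j\<in>{1..m}. w j y > w j y' \<longleftrightarrow> w' j y > w' j y'"
  shows "C {y, y'} w \<subseteq> C {y, y'} w'"
proof
  fix x assume x: "x \<in> C {y, y'} w"
  show "x \<in> C {y, y'} w'"
  proof (rule ccontr)
    assume x': "x \<notin> C {y, y'} w'"
    from x ensemble_choice_aggregator_pair(2)[OF E Y w(1)] have "x \<in> {y, y'}" ..
    then obtain u where xu: "{x, u} = {y, y'}" by (auto simp: insert_commute)
    then have ux: "{u, x} = {y, y'}" by (simp add: insert_commute)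
    from xu Y have "x \<in> Y" "u \<in> Y" by (auto simp: doubleton_eq_iff)
    from xu ensemble_choice_aggregator_pair(2)[OF E Y w(2)] have "C {y, y'} w' \<subseteq> {x, u}"
      by simp
    with x' ensemble_choice_aggregator_pair(1)[OF E Y w(2)] have u': "u \<in> C {y, y'} w'"
      by blast
    from same have same': "\<forall>j\<in>{1..m}. w' j y > w' j y' \<longleftrightarrow> w j y > w j y'"
      by blast
    show False
    proof (cases "u \<in> C {y, y'} w")
      case True
      from strict_choice_kept_if_same_ranking[OF R ux \<open>u \<in> Y\<close> \<open>x \<in> Y\<close> w(2,1) same' u' x']
      show False using x by contradiction
    next
      case False
      from strict_choice_kept_if_same_ranking[OF R xu \<open>x \<in> Y\<close> \<open>u \<in> Y\<close> w same x False]
      show False using u' by contradiction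
    qed
  qed
qed

theorem lemma2:
  fixes Y :: "'y set" and m :: nat and S :: "nat \<Rightarrow> ('y \<Rightarrow> real) set"
    and C :: "'y set \<Rightarrow> 'y profile \<Rightarrow> 'y set"
    and y y' :: 'y and z z' :: "'y profile"
  assumes "Y \<noteq> {}" and "finite Y" and "m \<ge> 2"
    and "\<And>j. j \<in> {1..m} \<Longrightarrow> S j \<subseteq> Y \<rightarrow>\<^sub>E (UNIV :: real set)"
    and "ensemble_choice_aggregator Y (profiles m S) C"
    and "respects_model_choice_reversal m Y (profiles m S) C"
    and "y \<in> Y" and "y' \<in> Y"
    and "z \<in> profiles m S" and "z' \<in> profiles m S"
    and "\<forall>j\<in>{1..m}. (z j y > z j y') \<longleftrightarrow> (z' j y > z' j y')"
  shows "C {y, y'} z = C {y, y'} z'"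
proof
  show "C {y, y'} z \<subseteq> C {y, y'} z'"
    by (rule pair_choice_subset_if_same_ranking[OF assms(5-11)])
  from assms(11) have "\<forall>j\<in>{1..m}. (z' j y > z' j y') \<longleftrightarrow> (z j y > z j y')" by blast
  then show "C {y, y'} z' \<subseteq> C {y, y'} z"
    by (rule pair_choice_subset_if_same_ranking[OF assms(5-8,10,9)])
qed

end
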